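(* Let $a,b$ be positive integers with $\gcd(a,b)=1$ such that $(\mathbb{Z}/(a^2+b^2)\mathbb{Z})^{\times}$ is cyclic, let $n_1$ be a positive integer and let $m$ be a positive integer such that $(a^2+b^2)n_1-m^4=u^2+(a^2+b^2)z^2+(a^2+b^2)w^2$ for some $u\in\mathbb{Z}$, $z,w\in\mathbb{N}$. Assume moreover that $\gcd(m,p)=1$ for every odd prime $p$ dividing $a^2+b^2$, and that if $\gcd(m,a^2+b^2)>1$ then $2\nmid ab$ and $\gcd(m,a^2+b^2)=2$. Then there exist $x,y\in\mathbb{Z}$ with $$x^2+y^2+z^2+w^2=n_1\quad\text{and}\quad ax+by=m^2.$$ If in addition $m^2\ge \sqrt{b^2 n_1}$ and $a\le b$, then $x,y\ge 0$.
   Context: $\mathbb{N}=\{0,1,2,\dots\}$. *)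

theory Defs
  imports "HOL-Number_Theory.Number_Theory"
begin

end

theory Submission
  imports Defs
begin

(* Put N = a^2 + b^2 and R = n1 - z^2 - w^2, so that N R = m^4 + u^2. Then
   (b u)^2 - (a m^2)^2 = N (b^2 R - m^4), i.e. b u is a square root of (a m^2)^2 modulo N.
   Since (Z/N)^* is cyclic, 1 and -1 are the only square roots of 1, so b u = a m^2 or
   b u = -a m^2 (mod N); in the exceptional case N = 2M with M odd one argues modulo M and
   recovers the factor 2 by parity. Taking v = -u or v = u accordingly, N divides
   a m^2 + b v, and the identity
   (a c + b v)^2 + (b c - a v)^2 = (a^2 + b^2)(c^2 + v^2) with c = m^2 shows that
   x = (a m^2 + b v)/N and y = (b m^2 - a v)/N are integers with x^2 + y^2 = R and
   a x + b y = m^2. Finally x^2, y^2 <= n1 <= m^4/b^2, so a negative x or y would force the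
   other summand of a x + b y to exceed m^2. *)

lemma residue_primroot_sqrt_one_cases:
  assumes pr: "residue_primroot n g" and "n > 1" and "coprime t n" and "[t^2 = 1] (mod n)"
  shows "[t = 1] (mod n) \<or> [t = g ^ (totient n div 2)] (mod n)"
proof -
  have "t mod n \<in> totatives n"
  proof -
    have "\<not> n dvd t" using assms(2,3) by (metis coprime_common_divisor dvd_refl nat_dvd_1_iff_1 less_not_refl)
    then have "t mod n > 0" by (simp add: mod_greater_zero_iff_not_dvd)
    moreover have "coprime (t mod n) n" using assms(2,3) by simp
    ultimately show ?thesis using assms(2) by (simp add: in_totatives_iff order_less_imp_le)
  qed
  then obtain i where "i < totient n" "g ^ i mod n = t mod n"
    using residue_primroot_is_generator[OF assms(2) pr] by (force simp: bij_betw_def)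
  then have i: "i < totient n" "[g ^ i = t] (mod n)"
    by (simp_all add: cong_def)
  have "[(g ^ i)^2 = 1] (mod n)"
    using cong_pow[OF i(2), of 2] assms(4) by (rule cong_trans)
  then have "[g ^ (2 * i) = 1] (mod n)"
    by (simp add: power_mult mult.commute)
  then have "totient n dvd 2 * i"
    using pr by (simp add: ord_divides' residue_primroot_def)
  then obtain k where k: "2 * i = totient n * k" ..
  with i(1) have "k < 2"
    by (metis mult.commute mult_less_cancel2 mult_less_mono2 zero_less_numeral not_less)
  with k have "2 * i = 0 \<or> 2 * i = totient n"
    by (auto simp: less_2_cases_iff)
  then have "i = 0 \<or> i = totient n div 2" by auto
  then show ?thesis using i(2) by (auto dest: cong_sym)
qed

lemma residue_primroot_sqrt_one_nat:
  assumes pr: "residue_primroot n g" and "n > 2" and "coprime t n" and "[t^2 = 1] (mod n)"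
  shows "[t = 1] (mod n) \<or> [t = n - 1] (mod n)"
proof -
  have "(int (n - 1))^2 - 1 = int n * (int n - 2)"
    using assms(2) by (simp add: of_nat_diff power2_eq_square algebra_simps)
  then have "[(int (n - 1))^2 = 1] (mod int n)"
    by (simp add: cong_iff_dvd_diff)
  then have "[(n - 1)^2 = 1] (mod n)"
    by (simp flip: cong_int_iff)
  moreover have "coprime (n - 1) n"
    using assms(2) by (intro coprime_diff_one_left_nat) simp
  moreover have "\<not> [n - 1 = 1] (mod n)"
    using assms(2) by (simp add: cong_def)
  ultimately have root: "[n - 1 = g ^ (totient n div 2)] (mod n)"
    using residue_primroot_sqrt_one_cases[OF pr, of "n - 1"] assms(2) by linarith
  have "n > 1" using assms(2) by simp
  from residue_primroot_sqrt_one_cases[OF pr this assms(3,4)] show ?thesis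
    using cong_trans[OF _ cong_sym[OF root]] by blast
qed

lemma residue_primroot_sqrt_one:
  fixes M t :: int
  assumes pr: "residue_primroot (nat M) g" and "coprime t M" and "[t^2 = 1] (mod M)"
  shows "[t = 1] (mod M) \<or> [t = -1] (mod M)"
proof -
  consider "M = 1" | "M = 2" | "M > 2"
    using pr by (fastforce simp: residue_primroot_def)
  then show ?thesis
  proof cases
    case 1
    then show ?thesis by simp
  next
    case 2
    then show ?thesis
      using assms(2) by (simp add: cong_def coprime_right_2_iff_odd odd_iff_mod_2_eq_one)
  next
    case 3
    define t' where "t' = nat (t mod M)"
    have t': "int t' = t mod M" and M: "int (nat M) = M"
      using 3 by (simp_all add: t'_def)
    have t_cong: "[t = int t'] (mod M)"
      by (simp add: t' cong_def)
    have "[t' = 1] (mod nat M) \<or> [t' = nat M - 1] (mod nat M)"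
    proof (rule residue_primroot_sqrt_one_nat[OF pr])
      show "coprime t' (nat M)"
        using assms(2) 3 by (simp flip: coprime_int_iff add: t' M)
      have "[(int t')^2 = 1] (mod M)"
        using cong_pow[OF cong_sym[OF t_cong], of 2] assms(3) by (rule cong_trans)
      then show "[t'^2 = 1] (mod nat M)"
        using 3 by (simp flip: cong_int_iff add: M)
    qed (use 3 in simp)
    then have "[int t' = 1] (mod M) \<or> [int t' = M - 1] (mod M)"
      using 3 by (auto simp flip: cong_int_iff simp add: M of_nat_diff)
    moreover have "[M - 1 = -1] (mod M)"
      by (simp add: cong_iff_dvd_diff)
    ultimately show ?thesis
      using cong_trans[OF t_cong] cong_trans by blast
  qed
qed

lemma residue_primroot_square_cong:
  fixes M x y :: int
  assumes pr: "residue_primroot (nat M) g" and "coprime y M" and "[x^2 = y^2] (mod M)"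
  shows "[x = y] (mod M) \<or> [x = -y] (mod M)"
proof -
  obtain y' where y': "[y * y' = 1] (mod M)"
    using cong_solve_coprime_int[OF assms(2)] by blast
  have "[(x * y')^2 = (y * y')^2] (mod M)"
    using cong_mult[OF assms(3) cong_refl[of "y'^2"]] by (simp add: power_mult_distrib)
  also have "[(y * y')^2 = 1] (mod M)"
    using cong_pow[OF y', of 2] by simp
  finally have sq: "[(x * y')^2 = 1] (mod M)" .
  then have "coprime ((x * y')^2) M"
    using cong_imp_coprime[OF cong_sym[OF sq]] by simp
  then have "[x * y' = 1] (mod M) \<or> [x * y' = -1] (mod M)"
    using residue_primroot_sqrt_one[OF pr _ sq] by simp
  then have "[x * y' * y = y] (mod M) \<or> [x * y' * y = -y] (mod M)"
    using cong_mult[OF _ cong_refl[of y]] by fastforce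
  moreover have "[x = x * y' * y] (mod M)"
    using cong_mult[OF cong_refl[of x] y'] by (simp add: ac_simps cong_sym)
  ultimately show ?thesis
    using cong_trans by blast
qed

lemma residue_primroot_square_cong_double_odd:
  fixes M x y :: int
  assumes pr: "residue_primroot (nat (2 * M)) g" and "odd M" and "coprime y M"
    and sq: "[x^2 = y^2] (mod 2 * M)"
  shows "[x = y] (mod 2 * M) \<or> [x = -y] (mod 2 * M)"
proof -
  have "M > 0"
    using pr by (simp add: residue_primroot_def)
  have c2M: "coprime 2 M"
    using assms(2) by (simp add: coprime_left_2_iff_odd)
  have "nat (2 * M) = 2 * nat M" and "coprime 2 (nat M)"
    using \<open>M > 0\<close> c2M by (simp_all add: nat_mult_distrib flip: coprime_int_iff)
  then have "residue_primroot (nat M) g"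
    using residue_primroot_modulus_mult_coprimeD(2) pr by metis
  moreover have "[x^2 = y^2] (mod M)"
    using sq by (metis cong_modulus_mult mult.commute)
  ultimately have mod_M: "[x = y] (mod M) \<or> [x = -y] (mod M)"
    using residue_primroot_square_cong assms(3) by blast
  \<comment> \<open>Modulo 2, squaring is the identity, so only the odd part M needs the primitive root.\<close>
  have "even (x^2 - y^2)"
    using cong_modulus_mult[OF sq] by (simp add: cong_iff_dvd_diff)
  then have "[x = y] (mod 2)" and "[x = -y] (mod 2)"
    by (auto simp: cong_iff_dvd_diff)
  with mod_M c2M show ?thesis
    using coprime_cong_mult by blast
qed

lemma coprime_sum_squares:
  fixes a b :: int
  assumes "coprime a b"
  shows "coprime a (a^2 + b^2)"
proof -
  have "gcd a (a^2 + b^2) = gcd a (b^2)"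
    using gcd_add_mult[of a a "b^2"] by (simp add: power2_eq_square)
  moreover have "coprime a (b^2)"
    using assms by simp
  ultimately show ?thesis
    by (simp add: coprime_iff_gcd_eq_1)
qed

lemma sum_squares_odd_eq_double_odd:
  fixes a b :: int
  assumes "odd a" and "odd b"
  obtains M where "a^2 + b^2 = 2 * M" and "odd M"
proof -
  obtain k l where "a = 2 * k + 1" and "b = 2 * l + 1"
    using assms by (metis oddE)
  then have "a^2 + b^2 = 2 * (2 * (k^2 + k + l^2 + l) + 1)"
    by (simp add: power2_eq_square algebra_simps)
  then show ?thesis
    by (rule that) simp
qed

lemma sum_squares_linear_of_dvd:
  fixes a b c v R :: int
  assumes "a^2 + b^2 \<noteq> 0" and "(a^2 + b^2) * R = c^2 + v^2"
    and "(a^2 + b^2) dvd a * c + b * v"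
  shows "\<exists>x y. x^2 + y^2 = R \<and> a * x + b * y = c"
proof -
  define N where "N = a^2 + b^2"
  obtain x where x: "a * c + b * v = N * x"
    using assms(3) unfolding N_def by blast
  have brahmagupta: "(a * c + b * v)^2 + (b * c - a * v)^2 = N * (c^2 + v^2)"
    by (simp add: N_def power2_eq_square algebra_simps)
  then have "(b * c - a * v)^2 = N * (N * R) - (N * x)^2"
    using assms(2) x by (simp add: N_def)
  also have "\<dots> = N^2 * (R - x^2)"
    by (simp add: power2_eq_square algebra_simps)
  finally have "(b * c - a * v)^2 = N^2 * (R - x^2)" .
  then have "N^2 dvd (b * c - a * v)^2"
    by simp
  then obtain y where y: "b * c - a * v = N * y"
    by (auto simp: pow_divides_pow_iff)
  have "N * (a * x + b * y) = a * (N * x) + b * (N * y)"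
    by (simp add: algebra_simps)
  also have "\<dots> = N * c"
    unfolding x [symmetric] y [symmetric] by (simp add: N_def power2_eq_square algebra_simps)
  finally have "N * (a * x + b * y) = N * c" .
  moreover have "N * (N * (x^2 + y^2)) = N * (N * R)"
  proof -
    have "N * (N * (x^2 + y^2)) = (N * x)^2 + (N * y)^2"
      by (simp add: power2_eq_square algebra_simps)
    also have "\<dots> = N * (N * R)"
      unfolding x [symmetric] y [symmetric] brahmagupta using assms(2) by (simp add: N_def)
    finally show ?thesis .
  qed
  ultimately show ?thesis
    using assms(1) unfolding N_def by auto
qed

lemma square_cong_mod_sum_squares:
  fixes a b m r :: int
  assumes "coprime a b" and pr: "residue_primroot (nat (a^2 + b^2)) g"
    and "gcd m (a^2 + b^2) > 1 \<Longrightarrow> odd (a * b) \<and> gcd m (a^2 + b^2) = 2"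
    and sq: "[r^2 = (a * m^2)^2] (mod a^2 + b^2)"
  shows "[r = a * m^2] (mod a^2 + b^2) \<or> [r = -(a * m^2)] (mod a^2 + b^2)"
proof (cases "coprime m (a^2 + b^2)")
  case True
  then have "coprime (a * m^2) (a^2 + b^2)"
    using coprime_sum_squares[OF assms(1)] by simp
  then show ?thesis
    using residue_primroot_square_cong[OF pr _ sq] by blast
next
  case False
  have "a^2 + b^2 \<noteq> 0"
    using pr by (auto simp: residue_primroot_def)
  then have "gcd m (a^2 + b^2) \<noteq> 0" and "gcd m (a^2 + b^2) \<noteq> 1"
    using False by (simp_all add: coprime_iff_gcd_eq_1)
  then have "gcd m (a^2 + b^2) > 1"
    using gcd_ge_0_int[of m "a^2 + b^2"] by linarith
  with assms(3) have "odd a" "odd b" and gcd2: "gcd m (a^2 + b^2) = 2"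
    by auto
  then obtain M where NM: "a^2 + b^2 = 2 * M" and "odd M"
    using sum_squares_odd_eq_double_odd by blast
  have "gcd m M dvd gcd m (2 * M)"
    using gcd_dvd1 dvd_mult[OF gcd_dvd2] by (rule gcd_greatest)
  then have "gcd m M dvd gcd 2 M"
    using gcd2 gcd_dvd2 unfolding NM by (simp add: gcd_greatest)
  moreover have "coprime 2 M"
    using \<open>odd M\<close> by (simp add: coprime_left_2_iff_odd)
  ultimately have "is_unit (gcd m M)"
    by (simp only: coprime_iff_gcd_eq_1)
  then have "coprime m M"
    by (simp only: is_unit_gcd)
  moreover have "coprime a M"
    using coprime_sum_squares[OF assms(1)] unfolding NM by simp
  ultimately have "coprime (a * m^2) M"
    by simp
  from residue_primroot_square_cong_double_odd[OF pr[unfolded NM] \<open>odd M\<close> this sq[unfolded NM]]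
  show ?thesis
    unfolding NM .
qed

lemma nonneg_of_linear_eq_sum_squares_le:
  fixes a b c n x y :: int
  assumes "0 < a" and "a \<le> b" and "0 \<le> c" and lin: "a * x + b * y = c"
    and "x^2 \<le> n" and "y^2 \<le> n" and "b^2 * n \<le> c^2"
  shows "0 \<le> x \<and> 0 \<le> y"
proof -
  have big: "n < t^2" if "c < b * t" for t
  proof -
    have "c^2 < (b * t)^2"
      using that assms(3) by (intro power_strict_mono) auto
    with assms(7) have "b^2 * n < b^2 * t^2"
      by (simp add: power_mult_distrib)
    then show ?thesis
      by (simp add: mult_less_cancel_left)
  qed
  have "0 \<le> x"
  proof (rule ccontr)
    assume "\<not> 0 \<le> x"
    then have "a * x < 0"
      using assms(1) by (simp add: mult_pos_neg)
    then have "c < b * y"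
      using lin by linarith
    then show False
      using big assms(6) by fastforce
  qed
  moreover have "0 \<le> y"
  proof (rule ccontr)
    assume "\<not> 0 \<le> y"
    then have "b * y < 0"
      using assms(1,2) by (simp add: mult_pos_neg)
    then have "c < a * x"
      using lin by linarith
    moreover from this have "0 < a * x"
      using assms(3) by linarith
    then have "0 < x"
      using assms(1) by (simp add: zero_less_mult_iff)
    then have "a * x \<le> b * x"
      using assms(2) by simp
    ultimately have "c < b * x"
      by linarith
    then show False
      using big assms(5) by fastforce
  qed
  ultimately show ?thesis ..
qed

lemma sum_squares_linear_of_primroot:
  fixes a b m u R :: int
  assumes "coprime a b" and pr: "residue_primroot (nat (a^2 + b^2)) g"
    and "gcd m (a^2 + b^2) > 1 \<Longrightarrow> odd (a * b) \<and> gcd m (a^2 + b^2) = 2"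
    and NR: "(a^2 + b^2) * R = (m^2)^2 + u^2"
  shows "\<exists>x y. x^2 + y^2 = R \<and> a * x + b * y = m^2"
proof -
  define N where "N = a^2 + b^2"
  have "(b * u)^2 - (a * m^2)^2 = b^2 * ((m^2)^2 + u^2) - N * (m^2)^2"
    by (simp add: N_def power_mult_distrib algebra_simps)
  also have "\<dots> = N * (b^2 * R - (m^2)^2)"
    unfolding NR [folded N_def, symmetric] by (simp add: algebra_simps)
  finally have "[(b * u)^2 = (a * m^2)^2] (mod N)"
    by (simp add: cong_iff_dvd_diff)
  then have "[b * u = a * m^2] (mod N) \<or> [b * u = -(a * m^2)] (mod N)"
    using square_cong_mod_sum_squares[OF assms(1-3)] unfolding N_def by blast
  then obtain v where "v^2 = u^2" and "N dvd a * m^2 + b * v"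
  proof
    assume "[b * u = a * m^2] (mod N)"
    then have "N dvd a * m^2 + b * (-u)"
      by (simp add: cong_iff_dvd_diff dvd_diff_commute)
    then show thesis
      using that[of "-u"] by simp
  next
    assume "[b * u = -(a * m^2)] (mod N)"
    then have "N dvd a * m^2 + b * u"
      by (simp add: cong_iff_dvd_diff add.commute)
    then show thesis
      using that[of u] by simp
  qed
  moreover have "N \<noteq> 0"
    using pr by (auto simp: N_def residue_primroot_def)
  ultimately show ?thesis
    using sum_squares_linear_of_dvd[of a b R "m^2" v] NR unfolding N_def by simp
qed

theorem mainTheorem6:
  fixes a b n1 m :: int and z w :: nat
  assumes "a > 0" and "b > 0" and "gcd a b = 1"
    and "\<exists>g. residue_primroot (nat (a^2 + b^2)) g"
    and "n1 > 0" and "m > 0"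
    and "\<exists>u::int. (a^2 + b^2) * n1 - m^4
                 = u^2 + (a^2 + b^2) * (int z)^2 + (a^2 + b^2) * (int w)^2"
    and "\<And>p::int. prime p \<Longrightarrow> odd p \<Longrightarrow> p dvd (a^2 + b^2) \<Longrightarrow> gcd m p = 1"
    and "gcd m (a^2 + b^2) > 1 \<Longrightarrow> \<not> 2 dvd (a * b) \<and> gcd m (a^2 + b^2) = 2"
  shows "\<exists>x y :: int. x^2 + y^2 + (int z)^2 + (int w)^2 = n1 \<and> a * x + b * y = m^2 \<and>
           ((real_of_int (m^2) \<ge> sqrt (real_of_int (b^2 * n1)) \<and> a \<le> b) \<longrightarrow> x \<ge> 0 \<and> y \<ge> 0)"
proof -
  obtain g where pr: "residue_primroot (nat (a^2 + b^2)) g"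
    using assms(4) ..
  obtain u
    where u: "(a^2 + b^2) * n1 - m^4 = u^2 + (a^2 + b^2) * (int z)^2 + (a^2 + b^2) * (int w)^2"
    using assms(7) ..
  have "coprime a b"
    using assms(3) by (simp add: coprime_iff_gcd_eq_1)
  moreover have "(a^2 + b^2) * (n1 - (int z)^2 - (int w)^2) = (m^2)^2 + u^2"
    using u by (simp add: algebra_simps flip: power_mult)
  ultimately obtain x y
    where "x^2 + y^2 = n1 - (int z)^2 - (int w)^2" and lin: "a * x + b * y = m^2"
    using sum_squares_linear_of_primroot[OF _ pr assms(9)] by blast
  then have four_squares: "x^2 + y^2 + (int z)^2 + (int w)^2 = n1"
    by simp
  have "0 \<le> x \<and> 0 \<le> y" if "sqrt (real_of_int (b^2 * n1)) \<le> real_of_int (m^2)" and "a \<le> b"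
  proof (rule nonneg_of_linear_eq_sum_squares_le[OF assms(1) that(2) _ lin])
    show "b^2 * n1 \<le> (m^2)^2"
      using sqrt_le_D[OF that(1)] by (metis of_int_le_iff of_int_power)
    show "x^2 \<le> n1" and "y^2 \<le> n1"
      using four_squares zero_le_power2 [of x] zero_le_power2 [of y] zero_le_power2 [of "int z"]
        zero_le_power2 [of "int w"] by linarith+
  qed simp
  with four_squares lin show ?thesis
    by blast
qed

end
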